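(* Let $P$ be a causal program and $I$ an interpretation. Then $I$ is the least causal model of $P^I$ if and only if $I$ is the least causal model of $P^I_u$. In particular, causal stable models are the same whether the reduct $P^I$ or the uniform reduct $P^I_u$ is used.
   Context: Fix a set of labels $Lb$ and a set of atoms $At$. Terms are built by $t::=l\mid\prod S\mid\sum S\mid t_1\cdot t_2$ with $l\in Lb$ and $S$ any (possibly empty or infinite) set of terms; $1:=\prod\emptyset$, $0:=\sum\emptyset$; finite sums/products written with $+$, $*$. Causal values are equivalence classes of terms modulo the axioms of a completely distributive complete lattice with meet $*$ and join $+$ together with: $t\cdot(u\cdot w)=(t\cdot u)\cdot w$; $t=t+u\cdot t\cdot w$ and $u\cdot t\cdot w=t*u\cdot t\cdot w$; $1\cdot t=t=t\cdot1$; $t\cdot0=0=0\cdot t$; $l\cdot l=l$ for labels $l$; $\cdot$ distributes over (possibly infinite) sums on both sides; for terms $c,d,e$ without $+$: $c\cdot d\cdot e=(c\cdot d)*(d\cdot e)$ if $d\ne1$, $c\cdot(d*e)=(c\cdot d)*(c\cdot e)$, $(c*d)\cdot e=(c\cdot e)*(d\cdot e)$. $\mathbf V$ is the set of values, ordered by $t\le u$ iff $t*u=t$; $\mathbf C\subseteq\mathbf V$ is the set of values with a representative without $+$. $G\le_{\max}t$ means $G\in\mathbf C$, $G\le t$ and no $G'\in\mathbf C$ has $G<G'\le t$. A causal query is $\psi:\mathbf C\times\mathbf V\to\{0,1\}$ with $\psi(G,t)\le\psi(G,u)$ whenever $t\ge u$; monotonic if $\psi(G,u)\le\psi(G',w)$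 whenever $G\le G'$ (any $u,w$). A causal literal is $(\psi::A)$, $A\in At$. Literals: $(\psi::A)$ (positive), $\neg(\psi::A)$ (negative), $\neg\neg(\psi::A)$ (consistent). A causal program is a set of rules $r:H\leftarrow B_1,\dots,B_m$ with $r\in Lb$ or $r=1$, $H\in At$, each $B_i$ a literal or a term. An interpretation is $I:At\to\mathbf V$, ordered pointwise. $I(\psi::A)=\sum\{G\le_{\max}I(A):\psi(G,I(A))=1\}$; $I(t)=t$ for terms; $I(\neg L)=1$ iff $I(L)=0$ (else $0$); $I(\neg\neg L)=1$ iff $I(L)\ne0$ (else $0$); $I\models L$ iff $I(L)\ne0$. $I$ is a causal model of $P$ iff $(I(B_1)*\dots*I(B_m))\cdot r\le I(H)$ for every rule (empty product $=1$). Reduct: $\psi^t(G,u)=1$ iff there is $G'\in\mathbf C$ with $G'\le G$, $G'\le_{\max}t$, $\psi(G',t)=1$ (else $0$). The reduct of $(\psi::A)$ w.r.t. $I$ is $(\psi::A)$ if $\psi$ is monotonic and $(\psi^{I(A)}::A)$ otherwise. $P^I$: (i) delete every rule whose body has a negative or consistent literal not satisfied by $I$, (ii) delete the remaining negative and consistent literals, (iii) replace each remaining causal literal by its reduct. The uniform reduct $P^I_u$ is defined identically except that in step (iii) every remaining causal literal $(\psi::A)$, monotonic or not, is replaced by $(\psi^{I(A)}::A)$. Both $P^I$ and $P^I_u$ are positive programs with only monotonic queries and have least causal models. $I$ is a causal stable model of $P$ iff $I$ is the least causal model of $P^I$. *)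

theory Defs
  imports Main
begin

text \<open>
Causal values are represented concretely (following Cabalar, Fandinno and Fink,
"Causal graph justifications of logic programs") as ideals of causal graphs:
a causal graph is a transitively and reflexively closed set of edges over the
labels; a value is a set of causal graphs closed under taking supergraphs
(the order on graphs is reverse inclusion, so these are the order ideals).
Under this representation the meet is intersection, the join is union, the
order on values is inclusion, 0 is the empty ideal and 1 the set of all graphs.
\<close>

definition cgraph :: "('l \<times> 'l) set \<Rightarrow> bool" where
  "cgraph G \<longleftrightarrow> trans G \<and> (\<forall>(x, y) \<in> G. (x, x) \<in> G \<and> (y, y) \<in> G)"

type_synonym 'l cval = "('l \<times> 'l) set set"

definition is_val :: "'l cval \<Rightarrow> bool" where
  "is_val t \<longleftrightarrow> (\<forall>G \<in> t. cgraph G) \<and>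
                 (\<forall>G G'. G \<in> t \<longrightarrow> cgraph G' \<longrightarrow> G \<subseteq> G' \<longrightarrow> G' \<in> t)"

definition one_val :: "'l cval" where
  "one_val = {G. cgraph G}"

definition lab_val :: "'l \<Rightarrow> 'l cval" where
  "lab_val l = {G. cgraph G \<and> (l, l) \<in> G}"

definition prod_val :: "'l cval set \<Rightarrow> 'l cval" where
  "prod_val S = one_val \<inter> \<Inter> S"

definition gcat :: "('l \<times> 'l) set \<Rightarrow> ('l \<times> 'l) set \<Rightarrow> ('l \<times> 'l) set" where
  "gcat G1 G2 = (G1 \<union> G2 \<union> {(x, y). x \<in> Field G1 \<and> y \<in> Field G2})\<^sup>+"

definition app_val :: "'l cval \<Rightarrow> 'l cval \<Rightarrow> 'l cval" where
  "app_val t u = {G. cgraph G \<and> (\<exists>G1 \<in> t. \<exists>G2 \<in> u. gcat G1 G2 \<subseteq> G)}"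

text \<open>Principal ideal of a graph; the set C of values with a +-free
representative consists exactly of these.\<close>
definition prin :: "('l \<times> 'l) set \<Rightarrow> 'l cval" where
  "prin G = {G'. cgraph G' \<and> G \<subseteq> G'}"

definition is_cval :: "'l cval \<Rightarrow> bool" where
  "is_cval t \<longleftrightarrow> (\<exists>G. cgraph G \<and> t = prin G)"

definition maxle :: "'l cval \<Rightarrow> 'l cval \<Rightarrow> bool" where
  "maxle G t \<longleftrightarrow> is_cval G \<and> G \<subseteq> t \<and> \<not> (\<exists>G'. is_cval G' \<and> G \<subset> G' \<and> G' \<subseteq> t)"

type_synonym 'l query = "'l cval \<Rightarrow> 'l cval \<Rightarrow> bool"

definition causal_query :: "'l query \<Rightarrow> bool" where
  "causal_query \<psi> \<longleftrightarrow> (\<forall>G t u. is_cval G \<longrightarrow> is_val t \<longrightarrow> is_val u \<longrightarrow>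
      u \<subseteq> t \<longrightarrow> \<psi> G t \<longrightarrow> \<psi> G u)"

definition monotonic_query :: "'l query \<Rightarrow> bool" where
  "monotonic_query \<psi> \<longleftrightarrow> (\<forall>G G' u w. is_cval G \<longrightarrow> is_cval G' \<longrightarrow> is_val u \<longrightarrow> is_val w \<longrightarrow>
      G \<subseteq> G' \<longrightarrow> \<psi> G u \<longrightarrow> \<psi> G' w)"

definition qred :: "'l query \<Rightarrow> 'l cval \<Rightarrow> 'l query" where
  "qred \<psi> t = (\<lambda>G u. \<exists>G'. is_cval G' \<and> G' \<subseteq> G \<and> maxle G' t \<and> \<psi> G' t)"

datatype ('l, 'a) bodyelem =
    CPos "'l query" 'a
  | CNeg "'l query" 'a
  | CCons "'l query" 'a
  | BTerm "'l cval"

text \<open>A rule: label (None stands for the rule label 1), head atom, body.\<close>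
type_synonym ('l, 'a) crule = "'l option \<times> 'a \<times> ('l, 'a) bodyelem list"

type_synonym ('l, 'a) cprogram = "('l, 'a) crule set"

type_synonym ('l, 'a) interp = "'a \<Rightarrow> 'l cval"

definition rule_val :: "'l option \<Rightarrow> 'l cval" where
  "rule_val r = (case r of None \<Rightarrow> one_val | Some l \<Rightarrow> lab_val l)"

definition is_interp :: "('l, 'a) interp \<Rightarrow> bool" where
  "is_interp I \<longleftrightarrow> (\<forall>A. is_val (I A))"

definition eval_query :: "('l, 'a) interp \<Rightarrow> 'l query \<Rightarrow> 'a \<Rightarrow> 'l cval" where
  "eval_query I \<psi> A = \<Union> {G. maxle G (I A) \<and> \<psi> G (I A)}"

fun eval_be :: "('l, 'a) interp \<Rightarrow> ('l, 'a) bodyelem \<Rightarrow> 'l cval" where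
  "eval_be I (CPos \<psi> A) = eval_query I \<psi> A"
| "eval_be I (CNeg \<psi> A) = (if eval_query I \<psi> A = {} then one_val else {})"
| "eval_be I (CCons \<psi> A) = (if eval_query I \<psi> A \<noteq> {} then one_val else {})"
| "eval_be I (BTerm t) = t"

definition is_causal_model :: "('l, 'a) cprogram \<Rightarrow> ('l, 'a) interp \<Rightarrow> bool" where
  "is_causal_model P I \<longleftrightarrow>
     (\<forall>(r, H, B) \<in> P. app_val (prod_val (eval_be I ` set B)) (rule_val r) \<subseteq> I H)"

definition least_causal_model :: "('l, 'a) cprogram \<Rightarrow> ('l, 'a) interp \<Rightarrow> bool" where
  "least_causal_model P I \<longleftrightarrow> is_interp I \<and> is_causal_model P I \<and>
     (\<forall>J. is_interp J \<longrightarrow> is_causal_model P J \<longrightarrow> (\<forall>A. I A \<subseteq> J A))"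

fun be_queries :: "('l, 'a) bodyelem \<Rightarrow> 'l query set" where
  "be_queries (CPos \<psi> A) = {\<psi>}"
| "be_queries (CNeg \<psi> A) = {\<psi>}"
| "be_queries (CCons \<psi> A) = {\<psi>}"
| "be_queries (BTerm t) = {}"

definition causal_program :: "('l, 'a) cprogram \<Rightarrow> bool" where
  "causal_program P \<longleftrightarrow> (\<forall>(r, H, B) \<in> P. \<forall>b \<in> set B.
      (\<forall>\<psi> \<in> be_queries b. causal_query \<psi>) \<and> (\<forall>t. b = BTerm t \<longrightarrow> is_val t))"

fun is_negcons :: "('l, 'a) bodyelem \<Rightarrow> bool" where
  "is_negcons (CNeg \<psi> A) = True"
| "is_negcons (CCons \<psi> A) = True"
| "is_negcons _ = False"

text \<open>Reduct of a body element (only applied to positive literals and terms).\<close>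
fun red_be :: "('l, 'a) interp \<Rightarrow> ('l, 'a) bodyelem \<Rightarrow> ('l, 'a) bodyelem" where
  "red_be I (CPos \<psi> A) =
     (if monotonic_query \<psi> then CPos \<psi> A else CPos (qred \<psi> (I A)) A)"
| "red_be I b = b"

fun ured_be :: "('l, 'a) interp \<Rightarrow> ('l, 'a) bodyelem \<Rightarrow> ('l, 'a) bodyelem" where
  "ured_be I (CPos \<psi> A) = CPos (qred \<psi> (I A)) A"
| "ured_be I b = b"

definition body_ok :: "('l, 'a) interp \<Rightarrow> ('l, 'a) bodyelem list \<Rightarrow> bool" where
  "body_ok I B \<longleftrightarrow> (\<forall>b \<in> set B. is_negcons b \<longrightarrow> eval_be I b \<noteq> {})"

definition reduct :: "('l, 'a) cprogram \<Rightarrow> ('l, 'a) interp \<Rightarrow> ('l, 'a) cprogram" where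
  "reduct P I = {(r, H, map (red_be I) (filter (\<lambda>b. \<not> is_negcons b) B)) | r H B.
                   (r, H, B) \<in> P \<and> body_ok I B}"

definition ureduct :: "('l, 'a) cprogram \<Rightarrow> ('l, 'a) interp \<Rightarrow> ('l, 'a) cprogram" where
  "ureduct P I = {(r, H, map (ured_be I) (filter (\<lambda>b. \<not> is_negcons b) B)) | r H B.
                   (r, H, B) \<in> P \<and> body_ok I B}"

end

theory Submission
  imports Defs
begin

text \<open>
The two reducts differ only on monotonic queries \<psi>, which P^I keeps and P^I_u replaces by
\<psi>^I(A). In any interpretation \<psi>^I(A) yields at most what \<psi> yields, and in I itself at least as
much. This gives everything except that a least model I of P^I lies below every model J of
P^I_u. For that, take a graph G in I(H) but not in J(H) such that every finite proper subgraph
of G lying in some I(X) also lies in J(X), and remove from I the graphs contained in G that J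
lacks. By the choice of G, a minimal graph of the result that is contained in G is already
minimal in I, so \<psi>^I(A) holds for it in J as well; hence the result is still a model of P^I. But
it misses G, contradicting the leastness of I.
\<close>

lemma is_val_cgraph: "is_val v \<Longrightarrow> M \<in> v \<Longrightarrow> cgraph M"
  unfolding is_val_def by blast

lemma is_val_upward: "is_val v \<Longrightarrow> M \<in> v \<Longrightarrow> cgraph M' \<Longrightarrow> M \<subseteq> M' \<Longrightarrow> M' \<in> v"
  unfolding is_val_def by blast

lemma prin_subset_prin_iff: "cgraph M \<Longrightarrow> prin M \<subseteq> prin N \<longleftrightarrow> N \<subseteq> M"
  unfolding prin_def by auto

lemma prin_subset_val: "is_val v \<Longrightarrow> M \<in> v \<Longrightarrow> prin M \<subseteq> v"
  unfolding prin_def using is_val_upward by blast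

lemma is_cval_prin: "cgraph M \<Longrightarrow> is_cval (prin M)"
  unfolding is_cval_def by blast

lemma maxle_prin_iff:
  assumes "is_val v" and "cgraph M"
  shows "maxle (prin M) v \<longleftrightarrow> M \<in> v \<and> (\<forall>N \<in> v. N \<subseteq> M \<longrightarrow> N = M)"
proof
  assume max: "maxle (prin M) v"
  have "M \<in> prin M" using \<open>cgraph M\<close> unfolding prin_def by simp
  then have "M \<in> v"
    using max unfolding maxle_def by blast
  moreover have "N = M" if "N \<in> v" "N \<subseteq> M" for N
  proof (rule ccontr)
    assume "N \<noteq> M"
    have "cgraph N" using assms(1) \<open>N \<in> v\<close> by (rule is_val_cgraph)
    have "prin M \<subseteq> prin N" using \<open>N \<subseteq> M\<close> prin_subset_prin_iff[OF \<open>cgraph M\<close>] by simp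
    moreover have "\<not> prin N \<subseteq> prin M"
      using \<open>N \<subseteq> M\<close> \<open>N \<noteq> M\<close> prin_subset_prin_iff[OF \<open>cgraph N\<close>] by simp
    moreover have "is_cval (prin N)" "prin N \<subseteq> v"
      using is_cval_prin[OF \<open>cgraph N\<close>] prin_subset_val[OF assms(1) \<open>N \<in> v\<close>] by auto
    ultimately show False using max unfolding maxle_def by blast
  qed
  ultimately show "M \<in> v \<and> (\<forall>N \<in> v. N \<subseteq> M \<longrightarrow> N = M)" by blast
next
  assume min: "M \<in> v \<and> (\<forall>N \<in> v. N \<subseteq> M \<longrightarrow> N = M)"
  have no_larger: "\<not> prin M \<subset> prin N" if "cgraph N" "prin N \<subseteq> v" for N
  proof
    assume "prin M \<subset> prin N"
    have "N \<in> prin N" using \<open>cgraph N\<close> unfolding prin_def by simp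
    then have "N \<in> v" using \<open>prin N \<subseteq> v\<close> by blast
    moreover have "N \<subseteq> M"
      using psubset_imp_subset[OF \<open>prin M \<subset> prin N\<close>] prin_subset_prin_iff[OF \<open>cgraph M\<close>] by simp
    ultimately show False using min \<open>prin M \<subset> prin N\<close> by blast
  qed
  have "prin M \<subseteq> v" using prin_subset_val[OF assms(1)] min by blast
  then show "maxle (prin M) v"
    unfolding maxle_def is_cval_def using \<open>cgraph M\<close> no_larger by blast
qed

lemma maxle_obtain_prin:
  assumes "maxle X v"
  obtains M where "cgraph M" and "X = prin M"
  using assms unfolding maxle_def is_cval_def by blast

lemma finite_has_minimal_subgraph:
  assumes "is_val v" and "M \<in> v" and "finite M"
  obtains N where "N \<subseteq> M" and "N \<in> v" and "maxle (prin N) v"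
proof -
  have "finite {N \<in> v. N \<subseteq> M}" using \<open>finite M\<close> by simp
  then obtain N where N: "N \<in> v" "N \<subseteq> M"
    and min: "\<forall>N' \<in> {N \<in> v. N \<subseteq> M}. N' \<subseteq> N \<longrightarrow> N = N'"
    using finite_has_minimal2[of "{N \<in> v. N \<subseteq> M}" M] \<open>M \<in> v\<close> by auto
  have "maxle (prin N) v"
    unfolding maxle_prin_iff[OF \<open>is_val v\<close> is_val_cgraph[OF \<open>is_val v\<close> \<open>N \<in> v\<close>]]
    using min N by auto
  with N show ?thesis using that by blast
qed

lemma infinite_cgraph_proper_subgraph:
  assumes "cgraph M" and "infinite M" and "finite E" and "E \<subseteq> M"
  obtains M0 where "cgraph M0" and "E \<subseteq> M0" and "M0 \<subset> M" and "infinite M0"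
proof -
  have "M \<subseteq> Field M \<times> Field M" by (auto intro: FieldI1 FieldI2)
  then have "infinite (Field M)" using \<open>infinite M\<close> finite_subset by blast
  moreover have "finite (Field E)" using \<open>finite E\<close> by (rule finite_Field)
  ultimately obtain w where w: "w \<in> Field M" "w \<notin> Field E"
    using Diff_infinite_finite ex_in_conv finite.emptyI by (metis DiffE)
  define M0 where "M0 = {(x, y) \<in> M. x \<noteq> w \<and> y \<noteq> w}"
  have "cgraph M0" using \<open>cgraph M\<close> unfolding cgraph_def M0_def trans_def by blast
  moreover have "E \<subseteq> M0" using \<open>E \<subseteq> M\<close> w(2) unfolding M0_def by (auto intro: FieldI1 FieldI2)
  moreover have "(w, w) \<in> M" using w(1) \<open>cgraph M\<close> unfolding cgraph_def Field_def by blast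
  then have "M0 \<subset> M" unfolding M0_def by blast
  moreover have "infinite M0"
  proof
    assume "finite M0"
    have "(\<lambda>x. (x, x)) ` (Field M - {w}) \<subseteq> M0"
      using \<open>cgraph M\<close> unfolding cgraph_def M0_def Field_def by blast
    then have "finite (Field M - {w})"
      using \<open>finite M0\<close> finite_subset finite_imageD by (metis inj_on_convol_ident)
    then show False using \<open>infinite (Field M)\<close> by simp
  qed
  ultimately show ?thesis using that by blast
qed

lemma monotonic_queryD:
  "monotonic_query \<psi> \<Longrightarrow> is_cval G \<Longrightarrow> is_cval G' \<Longrightarrow> is_val u \<Longrightarrow> is_val w \<Longrightarrow>
    G \<subseteq> G' \<Longrightarrow> \<psi> G u \<Longrightarrow> \<psi> G' w"
  unfolding monotonic_query_def by blast

lemma eval_query_memI: "maxle X (J A) \<Longrightarrow> \<phi> X (J A) \<Longrightarrow> G1 \<in> X \<Longrightarrow> G1 \<in> eval_query J \<phi> A"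
  unfolding eval_query_def by blast

lemma eval_query_memE:
  assumes "G1 \<in> eval_query J \<phi> A"
  obtains M where "cgraph M" and "maxle (prin M) (J A)" and "\<phi> (prin M) (J A)"
    and "M \<subseteq> G1" and "cgraph G1"
proof -
  obtain X where X: "maxle X (J A)" "\<phi> X (J A)" "G1 \<in> X"
    using assms unfolding eval_query_def by blast
  then obtain M where "cgraph M" "X = prin M" by (elim maxle_obtain_prin)
  then show ?thesis using that X unfolding prin_def by blast
qed

lemma qred_prin_iff:
  assumes "is_val t" and "M \<in> t"
  shows "qred \<psi> t (prin M) u \<longleftrightarrow> maxle (prin M) t \<and> \<psi> (prin M) t"
proof
  assume "qred \<psi> t (prin M) u"
  then obtain G' where G': "G' \<subseteq> prin M" "maxle G' t" "\<psi> G' t"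
    unfolding qred_def by blast
  have "is_cval (prin M)" using is_cval_prin[OF is_val_cgraph[OF assms]] .
  moreover have "prin M \<subseteq> t" using assms by (rule prin_subset_val)
  ultimately have "G' = prin M" using G' unfolding maxle_def by blast
  then show "maxle (prin M) t \<and> \<psi> (prin M) t" using G' by simp
next
  assume "maxle (prin M) t \<and> \<psi> (prin M) t"
  then show "qred \<psi> t (prin M) u" unfolding qred_def maxle_def by blast
qed

lemma eval_query_qred_subset:
  assumes "monotonic_query \<psi>" and "is_val t" and "is_val (J A)"
  shows "eval_query J (qred \<psi> t) A \<subseteq> eval_query J \<psi> A"
proof
  fix G1 assume "G1 \<in> eval_query J (qred \<psi> t) A"
  then obtain X where X: "maxle X (J A)" "qred \<psi> t X (J A)" "G1 \<in> X"
    unfolding eval_query_def by blast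
  then obtain G' where "is_cval G'" "G' \<subseteq> X" "\<psi> G' t"
    unfolding qred_def by blast
  moreover have "is_cval X" using X(1) unfolding maxle_def by blast
  ultimately have "\<psi> X (J A)"
    using assms unfolding monotonic_query_def by blast
  then show "G1 \<in> eval_query J \<psi> A" using X by (blast intro: eval_query_memI)
qed

lemma eval_query_subset_qred_self: "eval_query I \<psi> A \<subseteq> eval_query I (qred \<psi> (I A)) A"
  unfolding eval_query_def qred_def maxle_def by blast

lemma eval_query_qredI:
  assumes "is_val (J A)" and "maxle (prin M) t" and "\<psi> (prin M) t"
    and "M \<in> J A" and "finite M" and "M \<subseteq> G1" and "cgraph G1"
  shows "G1 \<in> eval_query J (qred \<psi> t) A"
proof -
  obtain N where "N \<subseteq> M" and N_min: "maxle (prin N) (J A)"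
    using finite_has_minimal_subgraph[OF assms(1,4,5)] by blast
  have "cgraph M" using \<open>is_val (J A)\<close> \<open>M \<in> J A\<close> by (rule is_val_cgraph)
  then have "qred \<psi> t (prin N) (J A)"
    using assms(2,3) \<open>N \<subseteq> M\<close> prin_subset_prin_iff[of M N]
    unfolding qred_def maxle_def by blast
  moreover have "G1 \<in> prin N" using \<open>N \<subseteq> M\<close> assms(6,7) unfolding prin_def by blast
  ultimately show ?thesis using N_min by (blast intro: eval_query_memI)
qed

lemma eval_be_ured_subset_red:
  assumes "is_interp I" and "is_interp J"
  shows "eval_be J (ured_be I c) \<subseteq> eval_be J (red_be I c)"
proof (cases c)
  case (CPos \<psi> A)
  have "is_val (I A)" "is_val (J A)" using assms unfolding is_interp_def by blast+
  then show ?thesis using CPos eval_query_qred_subset[of \<psi> "I A" J A] by auto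
qed auto

lemma eval_be_red_subset_ured_self: "eval_be I (red_be I c) \<subseteq> eval_be I (ured_be I c)"
proof (cases c)
  case (CPos \<psi> A)
  then show ?thesis using eval_query_subset_qred_self[of I \<psi> A] by auto
qed auto

definition reduct_by :: "('l, 'a) cprogram \<Rightarrow> ('l, 'a) interp \<Rightarrow>
    (('l, 'a) bodyelem \<Rightarrow> ('l, 'a) bodyelem) \<Rightarrow> ('l, 'a) cprogram" where
  "reduct_by P I h = {(r, H, map h (filter (\<lambda>b. \<not> is_negcons b) B)) | r H B.
                        (r, H, B) \<in> P \<and> body_ok I B}"

lemma reduct_eq_reduct_by: "reduct P I = reduct_by P I (red_be I)"
  unfolding reduct_def reduct_by_def by (rule refl)

lemma ureduct_eq_reduct_by: "ureduct P I = reduct_by P I (ured_be I)"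
  unfolding ureduct_def reduct_by_def by (rule refl)

definition body_val :: "('l, 'a) interp \<Rightarrow> (('l, 'a) bodyelem \<Rightarrow> ('l, 'a) bodyelem) \<Rightarrow>
    ('l, 'a) bodyelem list \<Rightarrow> 'l cval" where
  "body_val J h B = prod_val ((\<lambda>c. eval_be J (h c)) ` {c \<in> set B. \<not> is_negcons c})"

lemma is_causal_model_reduct_by_iff:
  "is_causal_model (reduct_by P I h) J \<longleftrightarrow>
     (\<forall>r H B. (r, H, B) \<in> P \<longrightarrow> body_ok I B \<longrightarrow> app_val (body_val J h B) (rule_val r) \<subseteq> J H)"
    (is "?model \<longleftrightarrow> ?rules")
proof -
  have body: "eval_be J ` set (map h (filter (\<lambda>b. \<not> is_negcons b) B)) =
        (\<lambda>c. eval_be J (h c)) ` {c \<in> set B. \<not> is_negcons c}" for B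
    by auto
  show ?thesis
  proof
    assume ?model
    have "app_val (body_val J h B) (rule_val r) \<subseteq> J H"
      if "(r, H, B) \<in> P" and "body_ok I B" for r H B
    proof -
      have "(r, H, map h (filter (\<lambda>b. \<not> is_negcons b) B)) \<in> reduct_by P I h"
        using that unfolding reduct_by_def by blast
      then show ?thesis
        using \<open>?model\<close> body unfolding is_causal_model_def body_val_def by fastforce
    qed
    then show ?rules by blast
  next
    assume ?rules
    have "app_val (prod_val (eval_be J ` set B')) (rule_val r) \<subseteq> J H"
      if rule: "(r, H, B') \<in> reduct_by P I h" for r H B'
    proof -
      obtain B where "(r, H, B) \<in> P" "body_ok I B"
        and "B' = map h (filter (\<lambda>b. \<not> is_negcons b) B)"
        using rule unfolding reduct_by_def by blast
      then show ?thesis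
        using \<open>?rules\<close> body unfolding body_val_def by fastforce
    qed
    then show ?model unfolding is_causal_model_def by fast
  qed
qed

lemma body_val_mono:
  assumes "\<And>c. \<not> is_negcons c \<Longrightarrow> eval_be J (h1 c) \<subseteq> eval_be J' (h2 c)"
  shows "body_val J h1 B \<subseteq> body_val J' h2 B"
  using assms unfolding body_val_def prod_val_def by blast

lemma body_val_restrict_mono:
  assumes "\<And>c. \<not> is_negcons c \<Longrightarrow> eval_be J (h1 c) \<inter> R \<subseteq> eval_be J' (h2 c)"
  shows "body_val J h1 B \<inter> R \<subseteq> body_val J' h2 B"
  using assms unfolding body_val_def prod_val_def by blast

lemma app_val_mono: "t \<subseteq> t' \<Longrightarrow> app_val t u \<subseteq> app_val t' u"
  unfolding app_val_def by blast

lemma app_val_restrict: "G' \<in> app_val t u \<Longrightarrow> G' \<subseteq> G \<Longrightarrow> G' \<in> app_val (t \<inter> Pow G) u"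
proof -
  have "G1 \<subseteq> gcat G1 G2" for G1 G2 :: "('l \<times> 'l) set"
    unfolding gcat_def by auto
  then show "G' \<in> app_val t u \<Longrightarrow> G' \<subseteq> G \<Longrightarrow> G' \<in> app_val (t \<inter> Pow G) u"
    unfolding app_val_def by blast
qed

lemma is_causal_model_reduct_by_mono:
  assumes "is_causal_model (reduct_by P I h2) J"
    and "\<And>c. \<not> is_negcons c \<Longrightarrow> eval_be J (h1 c) \<subseteq> eval_be J (h2 c)"
  shows "is_causal_model (reduct_by P I h1) J"
  using assms app_val_mono[OF body_val_mono[of J h1 J h2]]
  unfolding is_causal_model_reduct_by_iff by fast

lemma is_causal_model_ureduct_if_reduct:
  assumes "is_interp I" and "is_interp J" and "is_causal_model (reduct P I) J"
  shows "is_causal_model (ureduct P I) J"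
  using assms(3) eval_be_ured_subset_red[OF assms(1,2)]
  unfolding reduct_eq_reduct_by ureduct_eq_reduct_by by (rule is_causal_model_reduct_by_mono)

lemma is_causal_model_reduct_if_ureduct_self:
  assumes "is_causal_model (ureduct P I) I"
  shows "is_causal_model (reduct P I) I"
  using assms eval_be_red_subset_ured_self
  unfolding reduct_eq_reduct_by ureduct_eq_reduct_by by (rule is_causal_model_reduct_by_mono)

lemma obtain_minimal_counterexample:
  fixes I J :: "'a \<Rightarrow> 'b set set"
  assumes "G0 \<in> I A0" and "G0 \<notin> J A0"
  obtains G H where "G \<in> I H" and "G \<notin> J H"
    and "\<And>X N. finite N \<Longrightarrow> N \<subset> G \<Longrightarrow> N \<in> I X \<Longrightarrow> N \<in> J X"
proof (cases "\<exists>N. finite N \<and> (\<exists>X. N \<in> I X \<and> N \<notin> J X)")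
  case True
  then obtain N0 where "finite N0 \<and> (\<exists>X. N0 \<in> I X \<and> N0 \<notin> J X)" by blast
  then obtain G where G: "finite G \<and> (\<exists>X. G \<in> I X \<and> G \<notin> J X)"
    and least: "\<forall>N. finite N \<and> (\<exists>X. N \<in> I X \<and> N \<notin> J X) \<longrightarrow> card G \<le> card N"
    using ex_has_least_nat[of "\<lambda>N. finite N \<and> (\<exists>X. N \<in> I X \<and> N \<notin> J X)" N0 card]
    by blast
  then obtain H where "G \<in> I H" "G \<notin> J H" by blast
  moreover have "N \<in> J X" if "finite N" "N \<subset> G" "N \<in> I X" for X N
    using least psubset_card_mono[OF _ \<open>N \<subset> G\<close>] G that by fastforce
  ultimately show ?thesis by (rule that)
next
  case False
  then have "N \<in> J X" if "finite N" "N \<in> I X" for X N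
    using that by blast
  then show ?thesis using that[OF assms] by blast
qed

locale minimal_counterexample =
  fixes I J :: "('l, 'a) interp" and H :: 'a and G :: "('l \<times> 'l) set"
  assumes interp_I: "is_interp I" and interp_J: "is_interp J"
    and G_in_I: "G \<in> I H" and G_notin_J: "G \<notin> J H"
    and finite_below_G: "\<And>X N. finite N \<Longrightarrow> N \<subset> G \<Longrightarrow> N \<in> I X \<Longrightarrow> N \<in> J X"
begin

lemma is_val_I: "is_val (I X)" and is_val_J: "is_val (J X)"
  using interp_I interp_J unfolding is_interp_def by blast+

text \<open>Adding all infinite graphs makes every minimal graph of \<open>trim X\<close> finite, and only finite
  subgraphs of G are controlled by the choice of G.\<close>

definition trim :: "('l, 'a) interp" where
  "trim X = {N \<in> I X. N \<subseteq> G \<longrightarrow> N \<in> J X} \<union> {N. cgraph N \<and> infinite N \<and> (N \<subseteq> G \<longrightarrow> X \<noteq> H)}"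

lemma is_interp_trim: "is_interp trim"
  unfolding is_interp_def is_val_def
proof (intro allI conjI ballI impI)
  fix X N assume "N \<in> trim X"
  then show "cgraph N" unfolding trim_def using is_val_cgraph[OF is_val_I] by blast
next
  fix X N N' assume "N \<in> trim X" "cgraph N'" "N \<subseteq> N'"
  then show "N' \<in> trim X"
    unfolding trim_def using is_val_upward[OF is_val_I] is_val_upward[OF is_val_J] infinite_super
    by blast
qed

lemma is_val_trim: "is_val (trim X)"
  using is_interp_trim unfolding is_interp_def by blast

lemma G_notin_trim: "G \<notin> trim H"
  using G_notin_J unfolding trim_def by blast

lemma trim_minimal_finite:
  assumes min: "maxle (prin M) (trim X)" and "cgraph M"
  shows "finite M"
proof (rule ccontr)
  assume "infinite M"
  have M_trim: "M \<in> trim X" and M_least: "\<forall>N \<in> trim X. N \<subseteq> M \<longrightarrow> N = M"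
    using min unfolding maxle_prin_iff[OF is_val_trim \<open>cgraph M\<close>]
    by blast+
  obtain E where "finite E" "E \<subseteq> M" and E: "E \<subseteq> G \<longrightarrow> X \<noteq> H"
  proof (cases "M \<subseteq> G")
    case True
    then have "X \<noteq> H"
      using M_trim \<open>infinite M\<close> G_notin_J G_in_I is_val_cgraph[OF is_val_I]
        is_val_upward[OF is_val_J] unfolding trim_def by blast
    then show ?thesis using that[of "{}"] by blast
  next
    case False
    then obtain e where "e \<in> M" "e \<notin> G" by blast
    then show ?thesis using that[of "{e}"] by blast
  qed
  then obtain M0 where "cgraph M0" "E \<subseteq> M0" "M0 \<subset> M" "infinite M0"
    using infinite_cgraph_proper_subgraph[OF \<open>cgraph M\<close> \<open>infinite M\<close>] by blast
  then have "M0 \<in> trim X" using E unfolding trim_def by blast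
  then show False using M_least \<open>M0 \<subset> M\<close> by blast
qed

lemma trim_minimal_mem:
  assumes "maxle (prin M) (trim X)" and "cgraph M"
  shows "M \<in> I X" and "M \<subseteq> G \<Longrightarrow> M \<in> J X"
proof -
  have "M \<in> trim X" using assms maxle_prin_iff[OF is_val_trim] by blast
  then show "M \<in> I X" and "M \<subseteq> G \<Longrightarrow> M \<in> J X"
    using trim_minimal_finite[OF assms] unfolding trim_def by blast+
qed

lemma trim_minimal_below_G:
  assumes min: "maxle (prin M) (trim X)" and "cgraph M" and "M \<subseteq> G"
  shows "maxle (prin M) (I X)"
proof -
  obtain N where "N \<subseteq> M" and "N \<in> I X" and N_min: "maxle (prin N) (I X)"
    using finite_has_minimal_subgraph[OF is_val_I trim_minimal_mem(1)[OF min \<open>cgraph M\<close>]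
        trim_minimal_finite[OF min \<open>cgraph M\<close>]] .
  have "N \<in> J X"
  proof (cases "N = M")
    case True
    then show ?thesis using trim_minimal_mem(2)[OF min \<open>cgraph M\<close> \<open>M \<subseteq> G\<close>] by simp
  next
    case False
    then have "N \<subset> G" using \<open>N \<subseteq> M\<close> \<open>M \<subseteq> G\<close> by blast
    moreover have "finite N"
      using \<open>N \<subseteq> M\<close> trim_minimal_finite[OF min \<open>cgraph M\<close>] finite_subset by blast
    ultimately show ?thesis using finite_below_G \<open>N \<in> I X\<close> by blast
  qed
  then have "N \<in> trim X" using \<open>N \<in> I X\<close> unfolding trim_def by blast
  then have "N = M"
    using min \<open>N \<subseteq> M\<close> maxle_prin_iff[OF is_val_trim \<open>cgraph M\<close>] by blast
  then show ?thesis using N_min by simp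
qed

lemma eval_query_trim_subset:
  assumes "monotonic_query \<psi>"
  shows "eval_query trim \<psi> A \<subseteq> eval_query I \<psi> A"
proof
  fix G1 assume "G1 \<in> eval_query trim \<psi> A"
  then obtain M where "cgraph M" and M_min: "maxle (prin M) (trim A)"
    and "\<psi> (prin M) (trim A)" and "M \<subseteq> G1" and "cgraph G1"
    by (rule eval_query_memE)
  obtain N where "N \<subseteq> M" and "N \<in> I A" and N_min: "maxle (prin N) (I A)"
    using finite_has_minimal_subgraph[OF is_val_I trim_minimal_mem(1)[OF M_min \<open>cgraph M\<close>]
        trim_minimal_finite[OF M_min \<open>cgraph M\<close>]] .
  have "cgraph N" using is_val_I \<open>N \<in> I A\<close> by (rule is_val_cgraph)
  have "\<psi> (prin N) (I A)"
    using monotonic_queryD[OF assms is_cval_prin[OF \<open>cgraph M\<close>] is_cval_prin[OF \<open>cgraph N\<close>]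
        is_val_trim is_val_I] \<open>\<psi> (prin M) (trim A)\<close> \<open>N \<subseteq> M\<close> prin_subset_prin_iff[OF \<open>cgraph M\<close>]
    by blast
  moreover have "G1 \<in> prin N" using \<open>N \<subseteq> M\<close> \<open>M \<subseteq> G1\<close> \<open>cgraph G1\<close> unfolding prin_def by blast
  ultimately show "G1 \<in> eval_query I \<psi> A" using N_min by (blast intro: eval_query_memI)
qed

lemma eval_query_trim_qred_subset:
  "eval_query trim (qred \<psi> (I A)) A \<subseteq> eval_query I (qred \<psi> (I A)) A"
proof
  fix G1 assume "G1 \<in> eval_query trim (qred \<psi> (I A)) A"
  then obtain M where "cgraph M" and M_min: "maxle (prin M) (trim A)"
    and "qred \<psi> (I A) (prin M) (trim A)" and "M \<subseteq> G1" and "cgraph G1"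
    by (rule eval_query_memE)
  moreover have "M \<in> I A" using trim_minimal_mem(1)[OF M_min \<open>cgraph M\<close>] .
  ultimately have "maxle (prin M) (I A)" "qred \<psi> (I A) (prin M) (I A)"
    using qred_prin_iff[OF is_val_I] by blast+
  moreover have "G1 \<in> prin M" using \<open>M \<subseteq> G1\<close> \<open>cgraph G1\<close> unfolding prin_def by blast
  ultimately show "G1 \<in> eval_query I (qred \<psi> (I A)) A" by (blast intro: eval_query_memI)
qed

lemma eval_trim_red_subset:
  assumes "\<not> is_negcons c"
  shows "eval_be trim (red_be I c) \<subseteq> eval_be I (red_be I c)"
proof (cases c)
  case (CPos \<psi> A)
  then show ?thesis using eval_query_trim_subset eval_query_trim_qred_subset by simp
qed (use assms in auto)

lemma eval_trim_red_below_G: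
  assumes "\<not> is_negcons c"
  shows "eval_be trim (red_be I c) \<inter> Pow G \<subseteq> eval_be J (ured_be I c)"
proof (cases c)
  case (CPos \<psi> A)
  show ?thesis
  proof
    fix G1 assume G1: "G1 \<in> eval_be trim (red_be I c) \<inter> Pow G"
    define \<phi> where "\<phi> = (if monotonic_query \<psi> then \<psi> else qred \<psi> (I A))"
    have "G1 \<in> eval_query trim \<phi> A" using G1 CPos unfolding \<phi>_def by auto
    then obtain M where "cgraph M" and M_min: "maxle (prin M) (trim A)"
      and "\<phi> (prin M) (trim A)" and "M \<subseteq> G1" and "cgraph G1"
      by (rule eval_query_memE)
    have "M \<subseteq> G" using G1 \<open>M \<subseteq> G1\<close> by blast
    have "M \<in> I A" and "M \<in> J A" and "finite M"
      using trim_minimal_mem[OF M_min \<open>cgraph M\<close>] \<open>M \<subseteq> G\<close> trim_minimal_finite[OF M_min \<open>cgraph M\<close>]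
      by blast+
    have "\<psi> (prin M) (I A)"
    proof (cases "monotonic_query \<psi>")
      case True
      then show ?thesis
        using monotonic_queryD[OF True is_cval_prin[OF \<open>cgraph M\<close>] is_cval_prin[OF \<open>cgraph M\<close>]
            is_val_trim is_val_I] \<open>\<phi> (prin M) (trim A)\<close> unfolding \<phi>_def by simp
    next
      case False
      then show ?thesis
        using qred_prin_iff[OF is_val_I \<open>M \<in> I A\<close>] \<open>\<phi> (prin M) (trim A)\<close> unfolding \<phi>_def by simp
    qed
    then have "G1 \<in> eval_query J (qred \<psi> (I A)) A"
      using eval_query_qredI[where J = J and A = A, OF is_val_J trim_minimal_below_G[OF M_min \<open>cgraph M\<close> \<open>M \<subseteq> G\<close>]]
        \<open>M \<in> J A\<close> \<open>finite M\<close> \<open>M \<subseteq> G1\<close> \<open>cgraph G1\<close> by blast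
    then show "G1 \<in> eval_be J (ured_be I c)" using CPos by simp
  qed
qed (use assms in auto)

lemma is_causal_model_reduct_trim:
  assumes "is_causal_model (reduct P I) I" and "is_causal_model (ureduct P I) J"
  shows "is_causal_model (reduct P I) trim"
  unfolding reduct_eq_reduct_by is_causal_model_reduct_by_iff
proof (intro allI impI subsetI)
  fix r H' B G'
  assume rule: "(r, H', B) \<in> P" "body_ok I B"
    and G': "G' \<in> app_val (body_val trim (red_be I) B) (rule_val r)"
  have "body_val trim (red_be I) B \<subseteq> body_val I (red_be I) B"
    using eval_trim_red_subset by (rule body_val_mono)
  moreover have "app_val (body_val I (red_be I) B) (rule_val r) \<subseteq> I H'"
    using assms(1) rule unfolding reduct_eq_reduct_by is_causal_model_reduct_by_iff by blast
  ultimately have "G' \<in> I H'" using G' app_val_mono by blast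
  moreover have "G' \<in> J H'" if "G' \<subseteq> G"
  proof -
    have "body_val trim (red_be I) B \<inter> Pow G \<subseteq> body_val J (ured_be I) B"
      using eval_trim_red_below_G by (rule body_val_restrict_mono)
    moreover have "app_val (body_val J (ured_be I) B) (rule_val r) \<subseteq> J H'"
      using assms(2) rule unfolding ureduct_eq_reduct_by is_causal_model_reduct_by_iff by blast
    ultimately show ?thesis using app_val_restrict[OF G' \<open>G' \<subseteq> G\<close>] app_val_mono by blast
  qed
  ultimately show "G' \<in> trim H'" unfolding trim_def by blast
qed

end

lemma least_model_reduct_le_model_ureduct:
  assumes "is_interp I" and "least_causal_model (reduct P I) I"
    and "is_interp J" and "is_causal_model (ureduct P I) J"
  shows "I A \<subseteq> J A"
proof (rule ccontr)
  assume "\<not> I A \<subseteq> J A"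
  then obtain G0 where "G0 \<in> I A" "G0 \<notin> J A" by blast
  then obtain G H where "G \<in> I H" "G \<notin> J H"
    and "\<And>X N. finite N \<Longrightarrow> N \<subset> G \<Longrightarrow> N \<in> I X \<Longrightarrow> N \<in> J X"
    by (rule obtain_minimal_counterexample[where I = I and J = J]) blast
  with assms(1,3) interpret minimal_counterexample I J H G
    by unfold_locales
  have "is_causal_model (reduct P I) I"
    using assms(2) unfolding least_causal_model_def by blast
  then have "is_causal_model (reduct P I) trim"
    using assms(4) by (rule is_causal_model_reduct_trim)
  then have "I H \<subseteq> trim H"
    using assms(2) is_interp_trim unfolding least_causal_model_def by blast
  then show False using G_in_I G_notin_trim by blast
qed

theorem mainTheorem15:
  fixes P :: "('l, 'a) cprogram" and I :: "('l, 'a) interp"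
  assumes "causal_program P" and "is_interp I"
  shows "least_causal_model (reduct P I) I \<longleftrightarrow> least_causal_model (ureduct P I) I"
proof
  assume least: "least_causal_model (reduct P I) I"
  then have "is_causal_model (ureduct P I) I"
    using is_causal_model_ureduct_if_reduct[OF assms(2) assms(2)]
    unfolding least_causal_model_def by blast
  moreover have "I A \<subseteq> J A" if "is_interp J" and "is_causal_model (ureduct P I) J" for J A
    using assms(2) least that by (rule least_model_reduct_le_model_ureduct)
  ultimately show "least_causal_model (ureduct P I) I"
    using assms(2) unfolding least_causal_model_def by blast
next
  assume least: "least_causal_model (ureduct P I) I"
  then have "is_causal_model (reduct P I) I"
    using is_causal_model_reduct_if_ureduct_self unfolding least_causal_model_def by blast
  moreover have "I A \<subseteq> J A" if "is_interp J" and "is_causal_model (reduct P I) J" for J A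
    using least is_causal_model_ureduct_if_reduct[OF assms(2) that] that(1)
    unfolding least_causal_model_def by blast
  ultimately show "least_causal_model (reduct P I) I"
    using assms(2) unfolding least_causal_model_def by blast
qed

end
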